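(* Let $\mathbb L$ be a non-trivial finite lattice (more than one element). For every constant $D>1$ there exists a constant $D'>1$ such that there is a linear reduction from $\mathsf{Lattice\text{-}Eval}((\{0,1\};\wedge,\vee),D)$ restricted to instances with $\ell=1$ to $\mathsf{Lattice\text{-}Eval}(\mathbb L,D')$.
   Context: For a finite lattice $\mathbb L=(L;\wedge,\vee)$ and a constant $D>1$, $\mathsf{Lattice\text{-}Eval}(\mathbb L,D)$ is the assignment problem whose instances consist of: a circuit $C$ on a variable set $V$ over the basis $\{\wedge,\vee\}$ (fan-in 2) of depth less than $D+D\log_2|V|$; an element $\ell\in L$; and weights $w:V\to[0,1]$ with $\sum_x w(x)=1$. Assignments are maps $f:V\to L$; $f$ is satisfying if $C(f)\ge\ell$. $\mathrm{dist}_{\mathcal I}(f)$ is the minimum over satisfying $g$ of $\sum_{x:f(x)\ne g(x)}w(x)$. A linear reduction from assignment problem $\mathcal P$ to $\mathcal P'$: given an instance $\mathcal I$ of $\mathcal P$ with variable set $V$ and an assignment $f$, it (possibly randomly) produces an instance $\mathcal I'$ of $\mathcal P'$ with variable set $V'$, $|V'|=O(|V|)$, and an assignment $f'$ such that (i) if $f$ satisfies $\mathcal I$ then $f'$ satisfies $\mathcal I'$; (ii) there is a constant $c_1>0$ with: for every $\epsilon\in(0,1)$, if $\mathrm{dist}_{\mathcal I}(f)\ge\epsilon$ then $\Pr[\mathrm{dist}_{\mathcal I'}(f')\ge c_1\epsilon]\ge 9/10$; (iii) every value of $f'$ can be computed with at most a constant $c_2$ queries to $f$. *)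

theory Defs
  imports "HOL-Probability.Probability"
begin

text \<open>Variables are natural numbers (any finite variable set can be renamed into nat).
  A circuit is represented as a formula tree; since only depth (not size) is constrained,
  unfolding a DAG circuit into a tree preserves depth and semantics.\<close>

datatype circ = CVar nat | CAnd circ circ | COr circ circ

fun cvars :: "circ \<Rightarrow> nat set" where
  "cvars (CVar x) = {x}"
| "cvars (CAnd a b) = cvars a \<union> cvars b"
| "cvars (COr a b) = cvars a \<union> cvars b"

fun cdepth :: "circ \<Rightarrow> nat" where
  "cdepth (CVar x) = 0"
| "cdepth (CAnd a b) = Suc (max (cdepth a) (cdepth b))"
| "cdepth (COr a b) = Suc (max (cdepth a) (cdepth b))"

fun ceval :: "circ \<Rightarrow> (nat \<Rightarrow> 'a::lattice) \<Rightarrow> 'a" where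
  "ceval (CVar x) f = f x"
| "ceval (CAnd a b) f = inf (ceval a f) (ceval b f)"
| "ceval (COr a b) f = sup (ceval a f) (ceval b f)"

record 'a inst =
  ivars :: "nat set"
  icirc :: circ
  ilev  :: 'a
  iw    :: "nat \<Rightarrow> real"

definition lattice_eval :: "real \<Rightarrow> ('a::lattice) inst \<Rightarrow> bool" where
  "lattice_eval D I \<longleftrightarrow>
     finite (ivars I) \<and> cvars (icirc I) \<subseteq> ivars I \<and>
     real (cdepth (icirc I)) < D + D * log 2 (real (card (ivars I))) \<and>
     (\<forall>x\<in>ivars I. 0 \<le> iw I x \<and> iw I x \<le> 1) \<and>
     (\<Sum>x\<in>ivars I. iw I x) = 1"

definition sat :: "('a::lattice) inst \<Rightarrow> (nat \<Rightarrow> 'a) \<Rightarrow> bool" where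
  "sat I f \<longleftrightarrow> ilev I \<le> ceval (icirc I) f"

definition dist_inst :: "('a::lattice) inst \<Rightarrow> (nat \<Rightarrow> 'a) \<Rightarrow> real" where
  "dist_inst I f =
     Min ((\<lambda>g. \<Sum>x\<in>{x\<in>ivars I. f x \<noteq> g x}. iw I x) `
          {g. g \<in> ivars I \<rightarrow>\<^sub>E (UNIV :: 'a set) \<and> sat I g})"

text \<open>On input instance I, the reduction samples (from a distribution depending only on I)
  a target instance I', and for every target variable y a query set Q y (at most c2
  variables of I) together with a local decoder F y; the output assignment is
  f' y = F y f, where F y depends only on f restricted to Q y.\<close>
definition linear_reduction ::
  "(('b::lattice) inst \<Rightarrow> bool) \<Rightarrow> (('c::lattice) inst \<Rightarrow> bool) \<Rightarrow> bool" where
  "linear_reduction P P' \<longleftrightarrow>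
    (\<exists>(c0::real) (c1::real) (c2::nat)
      (red :: 'b inst \<Rightarrow> ('c inst \<times> (nat \<Rightarrow> nat set) \<times> (nat \<Rightarrow> (nat \<Rightarrow> 'b) \<Rightarrow> 'c)) pmf).
      c0 > 0 \<and> c1 > 0 \<and>
      (\<forall>I. P I \<longrightarrow>
         (\<forall>(I', Q, F) \<in> set_pmf (red I).
            P' I' \<and>
            real (card (ivars I')) \<le> c0 * real (card (ivars I)) \<and>
            (\<forall>y\<in>ivars I'. Q y \<subseteq> ivars I \<and> card (Q y) \<le> c2 \<and>
               (\<forall>f g. (\<forall>x\<in>Q y. f x = g x) \<longrightarrow> F y f = F y g)) \<and>
            (\<forall>f. sat I f \<longrightarrow> sat I' (\<lambda>y. F y f))) \<and>
         (\<forall>\<epsilon> f. 0 < \<epsilon> \<and> \<epsilon> < 1 \<and> dist_inst I f \<ge> \<epsilon> \<longrightarrow>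
            measure_pmf.prob (red I)
              {(I', Q, F). dist_inst I' (\<lambda>y. F y f) \<ge> c1 * \<epsilon>} \<ge> 9/10)))"

end

theory Submission
  imports Defs
begin

text \<open>Pick \<open>lo < hi\<close> in \<open>L\<close> and send the Boolean instance \<open>(C, 1, w)\<close> to \<open>(C, hi, w)\<close>, encoding
  an assignment by \<open>False \<mapsto> lo\<close>, \<open>True \<mapsto> hi\<close>. Since \<open>t \<mapsto> if t then hi else lo\<close> is a lattice
  embedding of \<open>{0,1}\<close>, satisfying assignments go to satisfying ones. Conversely, every
  \<open>g : V \<rightarrow> L\<close> with \<open>C(g) \<ge> hi\<close> pulls back along the upper set \<open>{y. \<not> y \<le> lo}\<close> to a satisfying
  Boolean assignment, and this pull-back disagrees with \<open>f\<close> only where \<open>g\<close> disagrees with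
  the encoding of \<open>f\<close>. Hence distances do not shrink, and the reduction works with \<open>D' = D\<close>
  and \<open>c\<^sub>1 = 1\<close>.\<close>

lemma ceval_cong: "(\<And>x. x \<in> cvars C \<Longrightarrow> f x = g x) \<Longrightarrow> ceval C f = ceval C g"
  by (induction C) auto

lemma ceval_const: "ceval C (\<lambda>_. c) = c"
  by (induction C) auto

lemma ceval_bool_embedding:
  fixes lo hi :: "'a::lattice"
  assumes "lo \<le> hi"
  shows "ceval C (\<lambda>x. if f x then hi else lo) = (if ceval C f then hi else lo)"
  using assms by (induction C) (auto simp: inf_absorb1 inf_absorb2 sup_absorb1 sup_absorb2)

lemma ceval_not_le_pullback:
  fixes p :: "'a::lattice"
  shows "\<not> ceval C g \<le> p \<Longrightarrow> ceval C (\<lambda>x. \<not> g x \<le> p)"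
proof (induction C)
  case (CAnd c1 c2)
  then show ?case by (auto intro: order_trans[OF inf_le1] order_trans[OF inf_le2])
qed auto

lemma sat_restrict:
  assumes "cvars (icirc I) \<subseteq> ivars I"
  shows "sat I (restrict g (ivars I)) \<longleftrightarrow> sat I g"
  unfolding sat_def using assms by (metis ceval_cong restrict_apply' subsetD)

lemma ex_less_if_card_gt_1:
  assumes "CARD('a::{finite,lattice}) > 1"
  shows "\<exists>lo hi :: 'a. lo < hi"
proof -
  obtain a b :: 'a where "a \<noteq> b"
    using assms card_le_Suc0_iff_eq[of "UNIV :: 'a set"] by force
  then have "inf a b \<noteq> sup a b"
    by (metis inf.cobounded1 inf.cobounded2 sup.cobounded1 sup.cobounded2 antisym order_trans)
  then have "inf a b < sup a b"
    by (simp add: less_le le_supI1)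
  then show ?thesis by blast
qed

text \<open>Satisfiability of \<open>J\<close> keeps \<open>dist_inst J f'\<close> away from the junk value \<open>Min {}\<close>.\<close>

lemma dist_inst_le_if_pullback:
  fixes I :: "'a::{finite,lattice} inst" and J :: "'b::{finite,lattice} inst"
  assumes fin: "finite (ivars I)" and vars: "ivars J = ivars I" and weights: "iw J = iw I"
    and nonneg: "\<And>x. x \<in> ivars I \<Longrightarrow> 0 \<le> iw I x"
    and satisfiable: "\<exists>g \<in> ivars J \<rightarrow>\<^sub>E UNIV. sat J g"
    and pullback: "\<And>g. g \<in> ivars J \<rightarrow>\<^sub>E UNIV \<Longrightarrow> sat J g \<Longrightarrow>
       \<exists>h \<in> ivars I \<rightarrow>\<^sub>E UNIV. sat I h \<and> {x \<in> ivars I. f x \<noteq> h x} \<subseteq> {x \<in> ivars I. f' x \<noteq> g x}"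
  shows "dist_inst I f \<le> dist_inst J f'"
proof -
  let ?V = "ivars I"
  let ?SI = "{h. h \<in> ?V \<rightarrow>\<^sub>E UNIV \<and> sat I h}"
  let ?SJ = "{g. g \<in> ?V \<rightarrow>\<^sub>E UNIV \<and> sat J g}"
  let ?dJ = "\<lambda>g. \<Sum>x\<in>{x \<in> ?V. f' x \<noteq> g x}. iw I x"
  have "finite ?SJ"
    by (rule finite_subset[of _ "?V \<rightarrow>\<^sub>E UNIV"]) (auto intro: finite_PiE fin)
  then have "dist_inst J f' \<in> ?dJ ` ?SJ"
    unfolding dist_inst_def vars weights using satisfiable vars by (intro Min_in) auto
  then obtain g where g: "g \<in> ?V \<rightarrow>\<^sub>E UNIV" "sat J g" and dist_J: "dist_inst J f' = ?dJ g"
    by auto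
  then obtain h where h: "h \<in> ?SI" and closer: "{x \<in> ?V. f x \<noteq> h x} \<subseteq> {x \<in> ?V. f' x \<noteq> g x}"
    using pullback vars by blast
  have "finite ?SI"
    by (rule finite_subset[of _ "?V \<rightarrow>\<^sub>E UNIV"]) (auto intro: finite_PiE fin)
  then have "dist_inst I f \<le> (\<Sum>x\<in>{x \<in> ?V. f x \<noteq> h x}. iw I x)"
    unfolding dist_inst_def using h by (intro Min_le) auto
  also have "\<dots> \<le> ?dJ g"
    by (rule sum_mono2) (use fin closer nonneg in auto)
  finally show ?thesis using dist_J by simp
qed

lemma linear_reduction_pointwise:
  fixes tr :: "'b::lattice inst \<Rightarrow> 'c::lattice inst" and e :: "'b \<Rightarrow> 'c"
  assumes target: "\<And>I. P I \<Longrightarrow> P' (tr I) \<and> ivars (tr I) = ivars I"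
    and preserves_sat: "\<And>I f. P I \<Longrightarrow> sat I f \<Longrightarrow> sat (tr I) (\<lambda>y. e (f y))"
    and dist_le: "\<And>I f. P I \<Longrightarrow> dist_inst I f \<le> dist_inst (tr I) (\<lambda>y. e (f y))"
  shows "linear_reduction P P'"
  unfolding linear_reduction_def
proof (intro exI[of _ 1] exI[of _ 1] exI[of _ "1::nat"]
    exI[of _ "\<lambda>I. return_pmf (tr I, \<lambda>y. {y}, \<lambda>y f. e (f y))"] conjI allI impI)
  fix I assume "P I"
  then show "\<forall>(I', Q, F) \<in> set_pmf (return_pmf (tr I, \<lambda>y. {y}, \<lambda>y f. e (f y))).
      P' I' \<and> real (card (ivars I')) \<le> 1 * real (card (ivars I)) \<and>
      (\<forall>y\<in>ivars I'. Q y \<subseteq> ivars I \<and> card (Q y) \<le> 1 \<and>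
         (\<forall>f g. (\<forall>x\<in>Q y. f x = g x) \<longrightarrow> F y f = F y g)) \<and>
      (\<forall>f. sat I f \<longrightarrow> sat I' (\<lambda>y. F y f))"
    using target preserves_sat by auto
  fix \<epsilon> f assume "0 < \<epsilon> \<and> \<epsilon> < 1 \<and> \<epsilon> \<le> dist_inst I f"
  with \<open>P I\<close> dist_le have "1 * \<epsilon> \<le> dist_inst (tr I) (\<lambda>y. e (f y))"
    by (metis mult_1 order_trans)
  then show "9/10 \<le> measure_pmf.prob (return_pmf (tr I, \<lambda>y. {y}, \<lambda>y f. e (f y)))
      {(I', Q, F). 1 * \<epsilon> \<le> dist_inst I' (\<lambda>y. F y f)}"
    by (simp add: measure_return)
qed simp_all

definition level_inst :: "'a \<Rightarrow> 'b inst \<Rightarrow> 'a inst" where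
  "level_inst c I = \<lparr>ivars = ivars I, icirc = icirc I, ilev = c, iw = iw I\<rparr>"

lemma ivars_level_inst [simp]: "ivars (level_inst c I) = ivars I"
  by (simp add: level_inst_def)

lemma lattice_eval_level_inst [simp]: "lattice_eval D (level_inst c I) \<longleftrightarrow> lattice_eval D I"
  by (simp add: lattice_eval_def level_inst_def)

lemma sat_level_inst_bool_embedding:
  fixes lo hi :: "'a::lattice"
  assumes "lo \<le> hi" "sat I f" "ilev I = True"
  shows "sat (level_inst hi I) (\<lambda>x. if f x then hi else lo)"
  using assms ceval_bool_embedding[OF \<open>lo \<le> hi\<close>] by (simp add: sat_def level_inst_def)

lemma dist_inst_le_level_inst:
  fixes lo hi :: "'a::{finite,lattice}"
  assumes "lo < hi" and I: "lattice_eval D I" "ilev I = True"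
  shows "dist_inst I f \<le> dist_inst (level_inst hi I) (\<lambda>x. if f x then hi else lo)"
proof (rule dist_inst_le_if_pullback)
  let ?J = "level_inst hi I"
  have cv: "cvars (icirc I) \<subseteq> ivars I" and cvJ: "cvars (icirc ?J) \<subseteq> ivars ?J"
    using I by (auto simp: lattice_eval_def level_inst_def)
  show "finite (ivars I)" "\<And>x. x \<in> ivars I \<Longrightarrow> 0 \<le> iw I x"
    using I by (auto simp: lattice_eval_def)
  show "ivars ?J = ivars I" "iw ?J = iw I"
    by (simp_all add: level_inst_def)
  have "sat ?J (\<lambda>_. hi)"
    by (simp add: sat_def level_inst_def ceval_const)
  then show "\<exists>g \<in> ivars ?J \<rightarrow>\<^sub>E UNIV. sat ?J g"
    using sat_restrict[OF cvJ] by (intro bexI[of _ "restrict (\<lambda>_. hi) (ivars ?J)"]) auto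
  fix g assume "sat ?J g"
  then have "\<not> ceval (icirc I) g \<le> lo"
    using \<open>lo < hi\<close> by (auto simp: sat_def level_inst_def dest: order.strict_trans2)
  then have "sat I (\<lambda>x. \<not> g x \<le> lo)"
    using I by (simp add: sat_def ceval_not_le_pullback)
  then have "sat I (restrict (\<lambda>x. \<not> g x \<le> lo) (ivars I))"
    using sat_restrict[OF cv] by simp
  moreover have "{x \<in> ivars I. f x \<noteq> (\<not> g x \<le> lo)} \<subseteq> {x \<in> ivars I. (if f x then hi else lo) \<noteq> g x}"
    using \<open>lo < hi\<close> by auto
  ultimately show "\<exists>h \<in> ivars I \<rightarrow>\<^sub>E UNIV. sat I h \<and>
      {x \<in> ivars I. f x \<noteq> h x} \<subseteq> {x \<in> ivars I. (if f x then hi else lo) \<noteq> g x}"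
    by (intro bexI[of _ "restrict (\<lambda>x. \<not> g x \<le> lo) (ivars I)"]) auto
qed

theorem mainTheorem14:
  assumes "CARD('a::{finite,lattice}) > 1"
  shows "\<forall>D::real. D > 1 \<longrightarrow> (\<exists>D'::real. D' > 1 \<and>
           linear_reduction (\<lambda>I::bool inst. lattice_eval D I \<and> ilev I = True)
                            (lattice_eval D' :: 'a inst \<Rightarrow> bool))"
proof (intro allI impI exI conjI)
  fix D :: real assume "D > 1"
  then show "D > 1" .
  obtain lo hi :: 'a where "lo < hi"
    using ex_less_if_card_gt_1[OF assms] by blast
  show "linear_reduction (\<lambda>I::bool inst. lattice_eval D I \<and> ilev I = True)
                         (lattice_eval D :: 'a inst \<Rightarrow> bool)"
  proof (rule linear_reduction_pointwise[where tr = "level_inst hi" and e = "\<lambda>t. if t then hi else lo"])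
    fix I :: "bool inst" and f assume I: "lattice_eval D I \<and> ilev I = True"
    then show "lattice_eval D (level_inst hi I) \<and> ivars (level_inst hi I) = ivars I"
      by simp
    show "sat I f \<Longrightarrow> sat (level_inst hi I) (\<lambda>y. if f y then hi else lo)"
      using I \<open>lo < hi\<close> by (intro sat_level_inst_bool_embedding) auto
    show "dist_inst I f \<le> dist_inst (level_inst hi I) (\<lambda>y. if f y then hi else lo)"
      using I \<open>lo < hi\<close> by (intro dist_inst_le_level_inst) auto
  qed
qed

end
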